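(* Let $\varphi_{-2,1}(\tau,z)=\vartheta_1(\tau,z)^2/\eta(\tau)^6$, and write its Fourier expansion as $\varphi_{-2,1}(\tau,z)=\sum_{n,r\in\mathbb{Z}} C_{-2}(4n-r^2)\,q^n\zeta^r$ (the coefficient depends only on $4n-r^2$). Then for every integer $\Delta\ge -1$ with $\Delta\equiv 0$ or $3 \pmod 4$ one has $(-1)^{\Delta+1}C_{-2}(\Delta)>0$.
   Context: $\tau$ is in the upper half-plane, $z\in\mathbb{C}$, $q=e^{2\pi i\tau}$, $\zeta=e^{2\pi i z}$. $\vartheta_1(\tau,z)=\sum_{n\in\mathbb{Z}}(-1)^n q^{\frac12(n-\frac12)^2}\zeta^{n-\frac12}$ and $\eta(\tau)=q^{1/24}\prod_{n\ge1}(1-q^n)$. The function $\varphi_{-2,1}$ is a weak Jacobi form of weight $-2$ and index $1$, so its coefficient of $q^n\zeta^r$ depends only on the discriminant $\Delta=4n-r^2$, which is $\equiv 0,3 \pmod 4$ and $\ge -1$ for nonzero coefficients. *)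

theory Defs
  imports "HOL-Analysis.Analysis"
begin

definition theta1 :: "complex \<Rightarrow> complex \<Rightarrow> complex" where
  "theta1 \<tau> z = (\<Sum>\<^sub>\<infinity>n::int. (-1) powi n *
      exp (2 * pi * \<i> * (\<tau> * (of_int n - 1/2)^2 / 2 + z * (of_int n - 1/2))))"

definition dedekind_eta :: "complex \<Rightarrow> complex" where
  "dedekind_eta \<tau> = exp (2 * pi * \<i> * \<tau> / 24) *
      (\<Prod>n. (1 - exp (2 * pi * \<i> * \<tau>) ^ Suc n))"

definition phi_m2_1 :: "complex \<Rightarrow> complex \<Rightarrow> complex" where
  "phi_m2_1 \<tau> z = theta1 \<tau> z ^ 2 / dedekind_eta \<tau> ^ 6"

definition phi_m2_1_coeff :: "int \<Rightarrow> int \<Rightarrow> complex" where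
  "phi_m2_1_coeff = (THE c. \<forall>\<tau> z. Im \<tau> > 0 \<longrightarrow>
      ((\<lambda>(n, r). c n r * exp (2 * pi * \<i> * \<tau>) powi n * exp (2 * pi * \<i> * z) powi r)
        has_sum phi_m2_1 \<tau> z) UNIV)"

end

theory Submission
  imports Defs "HOL-Computational_Algebra.Formal_Power_Series"
begin

text \<open>
  With \<open>q = e(\<tau>)\<close>, \<open>\<zeta> = e(z)\<close> and \<open>T(a) = a(a - 1)/2\<close> one has
  \<open>\<theta>\<^sub>1 = q\<^sup>1\<^sup>/\<^sup>8 \<zeta>\<^sup>-\<^sup>1\<^sup>/\<^sup>2 \<Sum>\<^sub>a (-1)\<^sup>a q\<^sup>T\<^sup>(\<^sup>a\<^sup>) \<zeta>\<^sup>a\<close> and \<open>\<eta>\<^sup>6 = q\<^sup>1\<^sup>/\<^sup>4 \<Prod>\<^sub>n (1 - q\<^sup>n)\<^sup>6\<close>, so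
  \<open>\<phi>\<^sub>-\<^sub>2\<^sub>,\<^sub>1 = \<zeta>\<^sup>-\<^sup>1 (\<Sum>\<^sub>a (-1)\<^sup>a q\<^sup>T\<^sup>(\<^sup>a\<^sup>) \<zeta>\<^sup>a)\<^sup>2 \<Prod>\<^sub>n (1 - q\<^sup>n)\<^sup>-\<^sup>6\<close>. Multiplying out these absolutely
  convergent series, the coefficient of \<open>q\<^sup>n \<zeta>\<^sup>r\<close> is \<open>(-1)\<^sup>r\<^sup>+\<^sup>1\<close> times the sum of \<open>p(k)\<close> over all
  \<open>(a, b, k)\<close> with \<open>T(a) + T(b) + k = n\<close> and \<open>a + b - 1 = r\<close>, where the coefficients \<open>p(k)\<close> of
  \<open>\<Prod>\<^sub>n (1 - q\<^sup>n)\<^sup>-\<^sup>6\<close> are positive. Such a triple exists as soon as \<open>4n - r\<^sup>2 \<ge> -1\<close>, and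
  \<open>\<Delta> = 4n - r\<^sup>2\<close> has the parity of \<open>r\<close>. Orthogonality of the characters \<open>e(ky)\<close> on \<open>[0, 1]\<close>
  makes the coefficients of such an expansion unique, so they are the \<open>C\<^sub>-\<^sub>2(\<Delta>)\<close>.
\<close>

section \<open>Uniqueness of Fourier coefficients\<close>

lemma has_integral_exp_2pi_int:
  fixes k :: int
  shows "((\<lambda>y::real. exp (2 * pi * \<i> * of_int k * of_real y)) has_integral (if k = 0 then 1 else 0)) {0..1}"
proof (cases "k = 0")
  case True
  then show ?thesis using has_integral_const_real[of "1::complex" 0 1] by simp
next
  case False
  define c where "c = 2 * pi * \<i> * of_int k"
  have c0: "c \<noteq> 0" using False by (simp add: c_def)
  have deriv: "((\<lambda>w. exp (c * w) / c) has_field_derivative exp (c * w)) (at w)" for w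
    using c0 by (auto intro!: derivative_eq_intros)
  have "((\<lambda>y. exp (c * of_real y)) has_integral (exp (c * of_real 1) / c - exp (c * of_real 0) / c)) {0..1}"
    by (rule fundamental_theorem_of_calculus)
       (auto intro!: has_vector_derivative_real_field deriv)
  moreover have "exp c = 1"
    using exp_integer_2pi[of "of_int k"] by (simp add: c_def mult_ac)
  ultimately show ?thesis using False by (simp add: c_def)
qed

lemma has_integral_fourier_poly_coeff:
  fixes a :: "'j \<Rightarrow> complex" and f :: "'j \<Rightarrow> int"
  assumes "finite F"
  shows "((\<lambda>y::real. exp (2 * pi * \<i> * y) powi (- s) * (\<Sum>j\<in>F. a j * exp (2 * pi * \<i> * y) powi f j))
           has_integral (\<Sum>j\<in>{j\<in>F. f j = s}. a j)) {0..1}"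
proof -
  have "exp (2 * pi * \<i> * y) powi (- s) * (\<Sum>j\<in>F. a j * exp (2 * pi * \<i> * y) powi f j)
      = (\<Sum>j\<in>F. a j * exp (2 * pi * \<i> * of_int (f j - s) * of_real y))" for y :: real
    by (simp add: sum_distrib_left exp_power_int mult_ac flip: exp_add) (simp add: algebra_simps)
  moreover have "((\<lambda>y::real. \<Sum>j\<in>F. a j * exp (2 * pi * \<i> * of_int (f j - s) * of_real y))
                  has_integral (\<Sum>j\<in>F. a j * (if f j - s = 0 then 1 else 0))) {0..1}"
    by (intro has_integral_sum assms has_integral_mult_right has_integral_exp_2pi_int)
  moreover have "(\<Sum>j\<in>F. a j * (if f j - s = 0 then 1 else 0)) = (\<Sum>j\<in>{j\<in>F. f j = s}. a j)"
    using assms by (auto simp: sum.inter_filter intro!: sum.cong)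
  ultimately show ?thesis by simp
qed

lemma norm_infsum_unimodular_le:
  fixes a w :: "'j \<Rightarrow> complex"
  assumes "(\<lambda>j. norm (a j)) summable_on J" "G \<subseteq> J" "\<And>j. j \<in> G \<Longrightarrow> norm (w j) = 1"
  shows "norm (\<Sum>\<^sub>\<infinity>j\<in>G. a j * w j) \<le> (\<Sum>\<^sub>\<infinity>j\<in>J. norm (a j))"
proof -
  have normG: "(\<lambda>j. norm (a j)) summable_on G"
    using assms(1,2) by (rule summable_on_subset_banach)
  have "norm (\<Sum>\<^sub>\<infinity>j\<in>G. a j * w j) \<le> (\<Sum>\<^sub>\<infinity>j\<in>G. norm (a j * w j))"
    using normG assms(3) by (intro norm_infsum_bound) (simp add: norm_mult cong: summable_on_cong)
  also have "\<dots> = (\<Sum>\<^sub>\<infinity>j\<in>G. norm (a j))"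
    using assms(3) by (intro infsum_cong) (simp add: norm_mult)
  also have "\<dots> \<le> (\<Sum>\<^sub>\<infinity>j\<in>J. norm (a j))"
    using normG assms(1,2) by (intro infsum_mono_neutral) auto
  finally show ?thesis .
qed

lemma fourier_fibre_has_sum_0:
  fixes a :: "'j \<Rightarrow> complex" and f :: "'j \<Rightarrow> int"
  assumes abs: "(\<lambda>j. norm (a j)) summable_on J"
    and zero: "\<And>y::real. ((\<lambda>j. a j * exp (2 * pi * \<i> * y) powi f j) has_sum 0) J"
  shows "(a has_sum 0) {j\<in>J. f j = s}"
proof -
  define A where "A = {j\<in>J. f j = s}"
  define e where "e = (\<lambda>y::real. exp (2 * pi * \<i> * y))"
  have norm_e: "norm (e y powi k) = 1" for y k
    by (simp add: e_def norm_power_int)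
  have summable_a: "a summable_on G" if "G \<subseteq> J" for G
    using abs_summable_summable[OF abs] that by (rule summable_on_subset_banach)
  have small: "norm (infsum a A) \<le> 2 * \<epsilon>" if "\<epsilon> > 0" for \<epsilon>
  proof -
    obtain F where F: "finite F" "F \<subseteq> J" "dist (\<Sum>j\<in>F. norm (a j)) (\<Sum>\<^sub>\<infinity>j\<in>J. norm (a j)) \<le> \<epsilon>"
      using infsum_finite_approximation[OF abs \<open>\<epsilon> > 0\<close>] by blast
    have split: "infsum g J = sum g F + infsum g (J - F)" if "g summable_on J" for g :: "'j \<Rightarrow> 'b::banach"
    proof -
      have "infsum g J = infsum g (F \<union> (J - F))"
        using F(2) by (simp add: Un_absorb1)
      also have "\<dots> = infsum g F + infsum g (J - F)"
        by (rule infsum_Un_disjoint) (use F that in \<open>auto intro: summable_on_subset_banach\<close>)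
      finally show ?thesis using F(1) by simp
    qed
    have tail_abs: "(\<Sum>\<^sub>\<infinity>j\<in>J - F. norm (a j)) \<le> \<epsilon>"
      using F(3) split[OF abs] by (simp add: dist_real_def)
    have tail: "norm (\<Sum>\<^sub>\<infinity>j\<in>G. a j * w j) \<le> \<epsilon>" if "G \<subseteq> J - F" "\<And>j. norm (w j) = 1" for G w
    proof (rule order_trans[OF _ tail_abs])
      show "norm (\<Sum>\<^sub>\<infinity>j\<in>G. a j * w j) \<le> (\<Sum>\<^sub>\<infinity>j\<in>J - F. norm (a j))"
        using that summable_on_subset_banach[OF abs, of "J - F"] by (intro norm_infsum_unimodular_le) auto
    qed
    have partial: "norm (\<Sum>j\<in>F. a j * e y powi f j) \<le> \<epsilon>" for y
    proof -
      have "(\<lambda>j. a j * e y powi f j) summable_on J"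
        using zero[of y] by (auto simp: e_def summable_on_def)
      from split[OF this] have "0 = (\<Sum>j\<in>F. a j * e y powi f j) + (\<Sum>\<^sub>\<infinity>j\<in>J - F. a j * e y powi f j)"
        using infsumI[OF zero[of y]] by (simp add: e_def)
      then have "norm (\<Sum>j\<in>F. a j * e y powi f j) = norm (\<Sum>\<^sub>\<infinity>j\<in>J - F. a j * e y powi f j)"
        by (simp add: eq_neg_iff_add_eq_0 [symmetric])
      also have "\<dots> \<le> \<epsilon>" by (rule tail) (auto simp: norm_e)
      finally show ?thesis .
    qed
    \<comment> \<open>Integrating the partial sum against \<open>e(y)\<^sup>-\<^sup>s\<close> isolates its part in \<open>A\<close>.\<close>
    have integral: "((\<lambda>y. e y powi (- s) * (\<Sum>j\<in>F. a j * e y powi f j)) has_integral (\<Sum>j\<in>F \<inter> A. a j)) (cbox 0 1)"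
    proof -
      have "F \<inter> A = {j\<in>F. f j = s}"
        using F(2) by (auto simp: A_def)
      then show ?thesis
        using has_integral_fourier_poly_coeff[OF F(1), of s a f] by (simp add: e_def)
    qed
    have "norm (e y powi (- s) * (\<Sum>j\<in>F. a j * e y powi f j)) \<le> \<epsilon>" for y
      using partial[of y] by (simp add: norm_mult norm_e)
    then have head: "norm (\<Sum>j\<in>F \<inter> A. a j) \<le> \<epsilon>"
      using has_integral_bound[OF _ integral, of \<epsilon>] \<open>\<epsilon> > 0\<close> by simp
    have "infsum a A = infsum a ((F \<inter> A) \<union> (A - F))"
      by (rule arg_cong[where f = "infsum a"]) blast
    also have "\<dots> = (\<Sum>j\<in>F \<inter> A. a j) + (\<Sum>\<^sub>\<infinity>j\<in>A - F. a j * 1)"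
      using F(1) summable_a[of A] by (subst infsum_Un_disjoint) (auto intro: summable_on_subset_banach simp: A_def)
    finally have "norm (infsum a A) \<le> norm (\<Sum>j\<in>F \<inter> A. a j) + norm (\<Sum>\<^sub>\<infinity>j\<in>A - F. a j * 1)"
      by (simp add: norm_triangle_ineq)
    moreover have "norm (\<Sum>\<^sub>\<infinity>j\<in>A - F. a j * 1) \<le> \<epsilon>"
      by (rule tail) (auto simp: A_def)
    ultimately show ?thesis
      using head by simp
  qed
  have "infsum a A = 0"
  proof (rule ccontr)
    assume "infsum a A \<noteq> 0"
    with small[of "norm (infsum a A) / 4"] show False by simp
  qed
  then show ?thesis
    using summable_a[of A] by (metis A_def has_sum_infsum mem_Collect_eq subsetI)
qed

lemma double_fourier_coeffs_eq_0:
  fixes d :: "int \<Rightarrow> int \<Rightarrow> complex"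
  assumes zero: "\<And>\<tau> z. Im \<tau> > 0 \<Longrightarrow>
    ((\<lambda>(n, r). d n r * exp (2 * pi * \<i> * \<tau>) powi n * exp (2 * pi * \<i> * z) powi r) has_sum 0) UNIV"
  shows "d m s = 0"
proof -
  have fibre_s: "((\<lambda>(n, r). d n r * exp (2 * pi * \<i> * \<tau>) powi n) has_sum 0) {j. snd j = s}"
    if "Im \<tau> > 0" for \<tau>
  proof -
    have "(\<lambda>(n, r). d n r * exp (2 * pi * \<i> * \<tau>) powi n) summable_on UNIV"
      using zero[OF that, of 0] by (auto simp: summable_on_def case_prod_unfold)
    then have "((\<lambda>(n, r). d n r * exp (2 * pi * \<i> * \<tau>) powi n) has_sum 0) {j \<in> UNIV. snd j = s}"
      using zero[OF that] by (intro fourier_fibre_has_sum_0)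
        (auto simp: case_prod_unfold summable_on_iff_abs_summable_on_complex)
    then show ?thesis by simp
  qed
  \<comment> \<open>On the line \<open>\<tau> = y + \<i>\<close> the factor \<open>q\<^sup>n\<close> becomes \<open>w\<^sup>n e(y)\<^sup>n\<close> with the constant \<open>w = e\<^sup>-\<^sup>2\<^sup>\<pi>\<close>.\<close>
  define w :: complex where "w = exp (- 2 * of_real pi)"
  have q_shift: "exp (2 * pi * \<i> * (of_real y + \<i>)) = w * exp (2 * pi * \<i> * of_real y)" for y :: real
  proof -
    have "2 * pi * \<i> * (of_real y + \<i>) = - 2 * of_real pi + 2 * pi * \<i> * of_real y"
      by (simp add: algebra_simps)
    then show ?thesis by (simp only: exp_add w_def)
  qed
  have "(\<lambda>(n, r). d n r * w powi n) summable_on {j. snd j = s}"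
    using fibre_s[of \<i>] q_shift[of 0] by (auto simp: summable_on_def case_prod_unfold)
  moreover have "((\<lambda>j. (case j of (n, r) \<Rightarrow> d n r * w powi n) * exp (2 * pi * \<i> * y) powi fst j) has_sum 0)
      {j. snd j = s}" for y :: real
    using fibre_s[of "of_real y + \<i>", unfolded q_shift]
    by (simp add: case_prod_unfold power_int_mult_distrib mult_ac)
  ultimately have "((\<lambda>(n, r). d n r * w powi n) has_sum 0) {j \<in> {j. snd j = s}. fst j = m}"
    by (intro fourier_fibre_has_sum_0) (auto simp: summable_on_iff_abs_summable_on_complex)
  moreover have "{j \<in> {j. snd j = s}. fst j = m} = {(m, s)}"
    by auto
  moreover have "((\<lambda>(n, r). d n r * w powi n) has_sum (d m s * w powi m)) {(m, s)}"
    by (rule has_sum_finiteI) auto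
  ultimately have "d m s * w powi m = 0"
    using has_sum_unique by fastforce
  then show ?thesis
    by (simp add: w_def)
qed

lemma double_fourier_coeffs_unique:
  fixes c c' :: "int \<Rightarrow> int \<Rightarrow> complex"
  assumes "\<And>\<tau> z. Im \<tau> > 0 \<Longrightarrow>
    ((\<lambda>(n, r). c n r * exp (2 * pi * \<i> * \<tau>) powi n * exp (2 * pi * \<i> * z) powi r) has_sum P \<tau> z) UNIV"
    and "\<And>\<tau> z. Im \<tau> > 0 \<Longrightarrow>
    ((\<lambda>(n, r). c' n r * exp (2 * pi * \<i> * \<tau>) powi n * exp (2 * pi * \<i> * z) powi r) has_sum P \<tau> z) UNIV"
  shows "c = c'"
proof (intro ext)
  fix m s
  have "(\<lambda>n r. c n r - c' n r) m s = 0"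
  proof (rule double_fourier_coeffs_eq_0)
    fix \<tau> z :: complex
    assume "Im \<tau> > 0"
    from has_sum_add[OF assms(1)[OF this, of z] has_sum_uminusI[OF assms(2)[OF this, of z]]] show
      "((\<lambda>(n, r). (c n r - c' n r) * exp (2 * pi * \<i> * \<tau>) powi n * exp (2 * pi * \<i> * z) powi r) has_sum 0) UNIV"
      by (simp add: case_prod_unfold algebra_simps)
  qed
  then show "c m s = c' m s" by simp
qed

section \<open>The power series of \<open>\<Prod>\<^sub>n (1 - q\<^sup>n)\<^sup>-\<^sup>6\<close>\<close>

unbundle no vec_syntax
notation fps_nth (infixl \<open>$\<close> 75)

definition geom_fps :: "nat \<Rightarrow> 'a::comm_semiring_1 fps" where
  "geom_fps m = Abs_fps (\<lambda>k. if Suc m dvd k then 1 else 0)"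

definition inv_eta6_fps :: "nat \<Rightarrow> 'a::comm_semiring_1 fps" where
  "inv_eta6_fps M = (\<Prod>m<M. geom_fps m ^ 6)"

text \<open>The \<open>k\<close>-th coefficient of \<open>\<Prod>\<^sub>n\<^sub>\<ge>\<^sub>1 (1 - q\<^sup>n)\<^sup>-\<^sup>6\<close>; factors with \<open>n > k\<close> do not contribute to it.\<close>
definition inv_eta6_coeff :: "nat \<Rightarrow> nat" where
  "inv_eta6_coeff k = (inv_eta6_fps k :: nat fps) $ k"

definition of_nat_fps :: "nat fps \<Rightarrow> 'a::comm_semiring_1 fps" where
  "of_nat_fps A = Abs_fps (\<lambda>k. of_nat (A $ k))"

lemma of_nat_fps_mult: "of_nat_fps (A * B) = (of_nat_fps A * of_nat_fps B :: 'a::comm_semiring_1 fps)"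
  by (rule fps_ext) (simp add: of_nat_fps_def fps_mult_nth)

lemma of_nat_fps_one: "of_nat_fps 1 = (1 :: 'a::comm_semiring_1 fps)"
  by (rule fps_ext) (simp add: of_nat_fps_def)

lemma of_nat_fps_power: "of_nat_fps (A ^ n) = (of_nat_fps A ^ n :: 'a::comm_semiring_1 fps)"
  by (induction n) (simp_all add: of_nat_fps_one of_nat_fps_mult)

lemma of_nat_fps_inv_eta6_fps: "of_nat_fps (inv_eta6_fps M) = (inv_eta6_fps M :: 'a::comm_semiring_1 fps)"
proof -
  have "of_nat_fps (geom_fps m) = (geom_fps m :: 'a fps)" for m
    by (rule fps_ext) (simp add: of_nat_fps_def geom_fps_def)
  then show ?thesis
    by (induction M) (simp_all add: inv_eta6_fps_def of_nat_fps_one of_nat_fps_mult of_nat_fps_power)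
qed

lemma inv_eta6_fps_nth: "(inv_eta6_fps M :: 'a::comm_semiring_1 fps) $ k = of_nat ((inv_eta6_fps M :: nat fps) $ k)"
  by (metis of_nat_fps_inv_eta6_fps fps_nth_Abs_fps of_nat_fps_def)

lemma fps_mult_nth_ge_left:
  fixes A B :: "nat fps"
  assumes "B $ 0 \<ge> 1"
  shows "(A * B) $ k \<ge> A $ k"
proof -
  have "A $ k \<le> A $ k * B $ (k - k)" using assms by simp
  also have "\<dots> \<le> (\<Sum>i=0..k. A $ i * B $ (k - i))"
    by (rule member_le_sum) auto
  finally show ?thesis by (simp add: fps_mult_nth)
qed

lemma fps_mult_nth_eq_left:
  fixes A F :: "'a::comm_semiring_1 fps"
  assumes "F $ 0 = 1" "\<And>j. 0 < j \<Longrightarrow> j \<le> M \<Longrightarrow> F $ j = 0" "k \<le> M"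
  shows "(A * F) $ k = A $ k"
proof -
  have "(A * F) $ k = (\<Sum>i=0..k. A $ i * F $ (k - i))" by (simp add: fps_mult_nth)
  also have "\<dots> = (\<Sum>i\<in>{k}. A $ i * F $ (k - i))"
    by (rule sum.mono_neutral_right) (use assms in auto)
  finally show ?thesis using assms by simp
qed

lemma fps_power_nth_eq_0:
  fixes F :: "'a::comm_semiring_1 fps"
  assumes "F $ 0 = 1" "\<And>j. 0 < j \<Longrightarrow> j \<le> M \<Longrightarrow> F $ j = 0"
  shows "(F ^ n) $ 0 = 1 \<and> (\<forall>j. 0 < j \<longrightarrow> j \<le> M \<longrightarrow> (F ^ n) $ j = 0)"
proof (induction n)
  case (Suc n)
  have "(F ^ Suc n) $ j = (F ^ n) $ j" if "j \<le> M" for j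
    using fps_mult_nth_eq_left[OF assms that, of "F ^ n"] by (simp add: mult.commute)
  with Suc assms show ?case by auto
qed simp

lemma geom_fps_power_nth_eq_0:
  "((geom_fps m :: 'a::comm_semiring_1 fps) ^ n) $ 0 = 1 \<and>
   (\<forall>j. 0 < j \<longrightarrow> j \<le> m \<longrightarrow> ((geom_fps m :: 'a fps) ^ n) $ j = 0)"
  by (rule fps_power_nth_eq_0) (auto simp: geom_fps_def dest: dvd_imp_le)

lemma inv_eta6_fps_Suc: "inv_eta6_fps (Suc M) = inv_eta6_fps M * geom_fps M ^ 6"
  by (simp add: inv_eta6_fps_def)

lemma inv_eta6_fps_nth_eq_coeff:
  assumes "k \<le> M"
  shows "(inv_eta6_fps M :: nat fps) $ k = inv_eta6_coeff k"
  using assms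
proof (induction M rule: dec_induct)
  case (step M)
  then show ?case
    unfolding inv_eta6_fps_Suc
    by (subst fps_mult_nth_eq_left) (use geom_fps_power_nth_eq_0[where 'a = nat] in auto)
qed (simp add: inv_eta6_coeff_def)

lemma inv_eta6_fps_nth_le_coeff:
  assumes "M \<le> k"
  shows "(inv_eta6_fps M :: nat fps) $ k \<le> inv_eta6_coeff k"
proof -
  have "(inv_eta6_fps M :: nat fps) $ k \<le> inv_eta6_fps (Suc M) $ k" for M
    unfolding inv_eta6_fps_Suc
    by (rule fps_mult_nth_ge_left) (use geom_fps_power_nth_eq_0[of M, where 'a = nat] in simp)
  then show ?thesis
    using lift_Suc_mono_le[of "\<lambda>M. (inv_eta6_fps M :: nat fps) $ k", OF _ assms]
    by (simp add: inv_eta6_coeff_def)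
qed

lemma inv_eta6_coeff_pos: "inv_eta6_coeff k \<ge> 1"
proof (cases k)
  case 0
  then show ?thesis by (simp add: inv_eta6_coeff_def inv_eta6_fps_def)
next
  case (Suc k')
  \<comment> \<open>Already the factor \<open>(1 - q)\<^sup>-\<^sup>6\<close> has only positive coefficients.\<close>
  have "((geom_fps 0 :: nat fps) ^ 5) $ 0 \<ge> 1"
    using geom_fps_power_nth_eq_0[of 0 5, where 'a = nat] by simp
  then have "(geom_fps 0 * (geom_fps 0 :: nat fps) ^ 5) $ k \<ge> (geom_fps 0 :: nat fps) $ k"
    by (rule fps_mult_nth_ge_left)
  then have "(inv_eta6_fps 1 :: nat fps) $ k \<ge> 1"
    by (simp add: inv_eta6_fps_def geom_fps_def numeral_eq_Suc)
  also have "(inv_eta6_fps 1 :: nat fps) $ k \<le> inv_eta6_coeff k"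
    using Suc by (intro inv_eta6_fps_nth_le_coeff) simp
  finally show ?thesis .
qed

lemma geom_fps_mult_one_minus_X_power: "(geom_fps m :: 'a::comm_ring_1 fps) * (1 - fps_X ^ Suc m) = 1"
proof (rule fps_ext)
  fix n
  have "((geom_fps m :: 'a fps) * (1 - fps_X ^ Suc m)) $ n = (geom_fps m :: 'a fps) $ n - (geom_fps m * fps_X ^ Suc m) $ n"
    by (simp add: algebra_simps)
  also have "\<dots> = (if n = 0 then 1 else 0)"
  proof (cases "n < Suc m")
    case True
    then show ?thesis
      by (auto simp: fps_X_power_mult_right_nth geom_fps_def simp del: power_Suc dest: dvd_imp_le)
  next
    case False
    then have "Suc m dvd n \<longleftrightarrow> Suc m dvd (n - Suc m)"
      by (simp add: dvd_minus_self)
    then show ?thesis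
      using False by (simp add: fps_X_power_mult_right_nth geom_fps_def del: power_Suc)
  qed
  finally show "((geom_fps m :: 'a fps) * (1 - fps_X ^ Suc m)) $ n = (1 :: 'a fps) $ n"
    by simp
qed

lemma norm_less_fps_conv_radius:
  fixes F :: "'a::{banach, real_normed_field} fps"
  assumes "fps_conv_radius F \<ge> 1" "norm z < 1"
  shows "norm z < fps_conv_radius F"
  using assms by (metis ereal_less(3) less_le_trans one_ereal_def)

lemma fps_conv_radius_geom_fps: "fps_conv_radius (geom_fps m :: 'a::{banach, real_normed_field} fps) \<ge> 1"
  unfolding fps_conv_radius_def
proof (rule conv_radius_geI_ex')
  fix r :: real
  assume r: "0 < r" "ereal r < 1"
  show "summable (\<lambda>n. (geom_fps m :: 'a fps) $ n * of_real r ^ n)"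
  proof (rule summable_comparison_test')
    show "summable (\<lambda>n. r ^ n)"
      using r by (intro summable_geometric) simp
    show "norm ((geom_fps m :: 'a fps) $ n * of_real r ^ n) \<le> r ^ n" for n
      using r by (simp add: geom_fps_def norm_mult norm_power)
  qed
qed

lemma eval_geom_fps:
  fixes z :: "'a::{banach, real_normed_field}"
  assumes "norm z < 1"
  shows "eval_fps (geom_fps m) z = inverse (1 - z ^ Suc m)"
proof -
  have "fps_conv_radius (1 - fps_X ^ Suc m :: 'a fps) = \<infinity>"
    using fps_conv_radius_diff[of "1 :: 'a fps" "fps_X ^ Suc m"] by (simp del: power_Suc)
  then have "eval_fps (geom_fps m * (1 - fps_X ^ Suc m)) z = eval_fps (geom_fps m) z * eval_fps (1 - fps_X ^ Suc m) z"
    using assms by (intro eval_fps_mult norm_less_fps_conv_radius fps_conv_radius_geom_fps) auto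
  then have "(1 - z ^ Suc m) * eval_fps (geom_fps m) z = 1"
    by (simp add: geom_fps_mult_one_minus_X_power eval_fps_diff mult.commute del: power_Suc)
  then show ?thesis
    by (rule inverse_unique [symmetric])
qed

lemma fps_conv_radius_inv_eta6_fps: "fps_conv_radius (inv_eta6_fps M :: 'a::{banach, real_normed_field} fps) \<ge> 1"
proof (induction M)
  case (Suc M)
  have "1 \<le> min (fps_conv_radius (inv_eta6_fps M :: 'a fps)) (fps_conv_radius ((geom_fps M :: 'a fps) ^ 6))"
    using Suc order_trans[OF fps_conv_radius_geom_fps fps_conv_radius_power] by simp
  also have "\<dots> \<le> fps_conv_radius (inv_eta6_fps (Suc M) :: 'a fps)"
    unfolding inv_eta6_fps_Suc by (rule fps_conv_radius_mult)
  finally show ?case .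
qed (simp add: inv_eta6_fps_def)

lemma eval_inv_eta6_fps:
  fixes z :: "'a::{banach, real_normed_field}"
  assumes "norm z < 1"
  shows "eval_fps (inv_eta6_fps M) z = inverse ((\<Prod>m<M. 1 - z ^ Suc m) ^ 6)"
proof (induction M)
  case (Suc M)
  have "eval_fps (inv_eta6_fps (Suc M)) z = eval_fps (inv_eta6_fps M) z * eval_fps ((geom_fps M :: 'a fps) ^ 6) z"
    unfolding inv_eta6_fps_Suc using assms
    by (intro eval_fps_mult norm_less_fps_conv_radius fps_conv_radius_inv_eta6_fps
        order_trans[OF fps_conv_radius_geom_fps fps_conv_radius_power])
  also have "eval_fps ((geom_fps M :: 'a fps) ^ 6) z = eval_fps (geom_fps M) z ^ 6"
    using assms by (intro eval_fps_power norm_less_fps_conv_radius fps_conv_radius_geom_fps)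
  finally show ?case
    using Suc assms by (simp add: eval_geom_fps power_inverse inverse_mult_distrib power_mult_distrib)
qed (simp add: inv_eta6_fps_def)

lemma convergent_prod_one_minus_power:
  fixes q :: "'a::{banach, real_normed_field}"
  assumes "norm q < 1"
  shows "convergent_prod (\<lambda>n. 1 - q ^ Suc n)"
proof -
  have "summable (\<lambda>i. norm q * norm q ^ i)"
    using assms by (intro summable_mult summable_geometric) simp
  then have "summable (\<lambda>i. norm ((1 - q ^ Suc i) - 1))"
    by (simp add: norm_mult norm_power)
  then show ?thesis
    by (intro abs_convergent_prod_imp_convergent_prod summable_imp_abs_convergent_prod)
qed

lemma one_minus_power_neq_0:
  fixes q :: "'a::{banach, real_normed_field}"
  assumes "norm q < 1"
  shows "1 - q ^ Suc n \<noteq> 0"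
proof
  assume "1 - q ^ Suc n = 0"
  then have "norm (q ^ Suc n) = 1" by (simp add: eq_iff_diff_eq_0[symmetric])
  moreover have "norm (q ^ Suc n) < 1"
    using assms power_less_one_iff[of "norm q" "Suc n"] by (simp add: norm_power del: power_Suc)
  ultimately show False by simp
qed

lemma summable_inv_eta6_series:
  fixes x :: real
  assumes x: "0 \<le> x" "x < 1"
  shows "summable (\<lambda>k. real (inv_eta6_coeff k) * x ^ k)"
proof (rule summableI_nonneg_bounded)
  define P where "P = (\<Prod>n. 1 - x ^ Suc n)"
  have conv: "convergent_prod (\<lambda>n. 1 - x ^ Suc n)"
    using x by (intro convergent_prod_one_minus_power) simp
  have pos: "0 < 1 - x ^ Suc n" for n
    using x power_less_one_iff[of x "Suc n"] by (simp del: power_Suc)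
  have P_pos: "0 < P"
    unfolding P_def using conv pos by (rule less_0_prodinf)
  fix K
  have "(\<Sum>k<K. real (inv_eta6_coeff k) * x ^ k) = (\<Sum>k<K. (inv_eta6_fps K :: real fps) $ k * x ^ k)"
    by (intro sum.cong) (simp_all add: inv_eta6_fps_nth[where 'a = real] inv_eta6_fps_nth_eq_coeff)
  also have "\<dots> \<le> (\<Sum>k. (inv_eta6_fps K :: real fps) $ k * x ^ k)"
  proof (rule sum_le_suminf)
    show "summable (\<lambda>k. (inv_eta6_fps K :: real fps) $ k * x ^ k)"
      using x by (intro summable_fps norm_less_fps_conv_radius fps_conv_radius_inv_eta6_fps) auto
  qed (use x in \<open>simp_all add: inv_eta6_fps_nth[where 'a = real]\<close>)
  also have "\<dots> = inverse ((\<Prod>m<K. 1 - x ^ Suc m) ^ 6)"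
    using x by (simp add: eval_fps_def [symmetric] eval_inv_eta6_fps)
  also have "\<dots> \<le> inverse (P ^ 6)"
  proof (intro le_imp_inverse_le power_mono)
    show "P \<le> (\<Prod>m<K. 1 - x ^ Suc m)"
      unfolding P_def using conv pos x
      by (intro prod_ge_prodinf) (auto intro: less_imp_le simp: convergent_prod_has_prod)
  qed (use P_pos in auto)
  finally show "(\<Sum>k<K. real (inv_eta6_coeff k) * x ^ k) \<le> inverse (P ^ 6)" .
qed (use assms in simp)

lemma norm_eval_inv_eta6_fps_diff_le:
  fixes q :: complex
  assumes q: "norm q < 1"
  shows "norm (eval_fps (inv_eta6_fps M) q - (\<Sum>k. of_nat (inv_eta6_coeff k) * q ^ k))
    \<le> (\<Sum>k. real (inv_eta6_coeff (k + M)) * norm q ^ (k + M))"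
proof -
  define b where "b = (\<lambda>k. real (inv_eta6_coeff k) * norm q ^ k)"
  define d where "d = (\<lambda>k. ((inv_eta6_fps M :: complex fps) $ k - of_nat (inv_eta6_coeff k)) * q ^ k)"
  have b: "summable b"
    unfolding b_def using q by (intro summable_inv_eta6_series) auto
  \<comment> \<open>The first \<open>M\<close> coefficients agree, the later ones lie between \<open>0\<close> and \<open>inv_eta6_coeff k\<close>.\<close>
  have d_le: "norm (d k) \<le> (if k < M then 0 else b k)" for k
  proof (cases "k < M")
    case False
    then have le: "(inv_eta6_fps M :: nat fps) $ k \<le> inv_eta6_coeff k"
      by (intro inv_eta6_fps_nth_le_coeff) simp
    then have "d k = - of_nat (inv_eta6_coeff k - (inv_eta6_fps M :: nat fps) $ k) * q ^ k"
      by (simp add: d_def inv_eta6_fps_nth[where 'a = complex] of_nat_diff)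
    then have "norm (d k) = real (inv_eta6_coeff k - (inv_eta6_fps M :: nat fps) $ k) * norm q ^ k"
      by (simp add: norm_mult norm_power)
    also have "\<dots> \<le> b k"
      unfolding b_def by (intro mult_right_mono) auto
    finally show ?thesis using False by simp
  qed (simp add: d_def inv_eta6_fps_nth[where 'a = complex] inv_eta6_fps_nth_eq_coeff)
  have tail: "summable (\<lambda>k. if k < M then 0 else b k)"
    by (rule summable_comparison_test'[OF b]) (simp add: b_def)
  have d: "summable (\<lambda>k. norm (d k))"
    by (rule summable_comparison_test'[OF tail]) (simp add: d_le)
  have "summable (\<lambda>k. (inv_eta6_fps M :: complex fps) $ k * q ^ k)"
    using q by (intro summable_fps norm_less_fps_conv_radius fps_conv_radius_inv_eta6_fps) auto
  moreover have "summable (\<lambda>k. of_nat (inv_eta6_coeff k) * q ^ k)"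
    by (rule summable_norm_cancel, rule summable_comparison_test'[OF b]) (simp add: b_def norm_mult norm_power)
  ultimately have "eval_fps (inv_eta6_fps M) q - (\<Sum>k. of_nat (inv_eta6_coeff k) * q ^ k) = suminf d"
    unfolding eval_fps_def d_def by (subst suminf_diff) (simp_all add: algebra_simps)
  then have "norm (eval_fps (inv_eta6_fps M) q - (\<Sum>k. of_nat (inv_eta6_coeff k) * q ^ k)) = norm (suminf d)"
    by (simp only:)
  also have "\<dots> \<le> (\<Sum>k. norm (d k))"
    by (rule summable_norm[OF d])
  also have "\<dots> \<le> (\<Sum>k. if k < M then 0 else b k)"
    by (rule suminf_le[OF d_le d tail])
  also have "\<dots> = (\<Sum>k. b (k + M))"
    using suminf_split_initial_segment[OF tail, of M] by simp
  finally show ?thesis by (simp add: b_def)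
qed

lemma inv_eta6_series_sums:
  fixes q :: complex
  assumes q: "norm q < 1"
  shows "(\<lambda>k. of_nat (inv_eta6_coeff k) * q ^ k) sums inverse ((\<Prod>n. 1 - q ^ Suc n) ^ 6)"
proof -
  define b where "b = (\<lambda>k. real (inv_eta6_coeff k) * norm q ^ k)"
  have b: "summable b"
    unfolding b_def using q by (intro summable_inv_eta6_series) auto
  have abs: "summable (\<lambda>k. norm (of_nat (inv_eta6_coeff k) * q ^ k))"
    using b by (simp add: b_def norm_mult norm_power)
  define P where "P = (\<Prod>n. 1 - q ^ Suc n)"
  have conv: "convergent_prod (\<lambda>n. 1 - q ^ Suc n)"
    using q by (rule convergent_prod_one_minus_power)
  have P: "P \<noteq> 0"
    unfolding P_def using conv one_minus_power_neq_0[OF q] by (rule prodinf_nonzero)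
  have "(\<lambda>M. \<Prod>m<Suc M. 1 - q ^ Suc m) \<longlonglongrightarrow> P"
    unfolding P_def lessThan_Suc_atMost by (rule convergent_prod_LIMSEQ[OF conv])
  then have "(\<lambda>M. \<Prod>m<M. 1 - q ^ Suc m) \<longlonglongrightarrow> P"
    by (rule LIMSEQ_imp_Suc)
  then have "(\<lambda>M. eval_fps (inv_eta6_fps M) q) \<longlonglongrightarrow> inverse (P ^ 6)"
    using \<open>P \<noteq> 0\<close> q by (simp add: eval_inv_eta6_fps) (intro tendsto_inverse tendsto_power; simp)
  moreover have "(\<lambda>M. eval_fps (inv_eta6_fps M) q) \<longlonglongrightarrow> (\<Sum>k. of_nat (inv_eta6_coeff k) * q ^ k)"
  proof -
    have "(\<lambda>M. suminf b - (\<Sum>k<M. b k)) \<longlonglongrightarrow> suminf b - suminf b"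
      by (intro tendsto_diff tendsto_const summable_LIMSEQ[OF b])
    then have "(\<lambda>M. suminf b - (\<Sum>k<M. b k)) \<longlonglongrightarrow> 0"
      by simp
    then have "(\<lambda>M. \<Sum>k. b (k + M)) \<longlonglongrightarrow> 0"
      by (simp add: suminf_minus_initial_segment[OF b])
    then have "(\<lambda>M. eval_fps (inv_eta6_fps M) q - (\<Sum>k. of_nat (inv_eta6_coeff k) * q ^ k)) \<longlonglongrightarrow> 0"
      by (rule Lim_null_comparison[rotated]) (use norm_eval_inv_eta6_fps_diff_le[OF q] in \<open>simp add: b_def\<close>)
    then show ?thesis
      by (simp add: LIM_zero_iff)
  qed
  ultimately show ?thesis
    using summable_sums[OF summable_norm_cancel[OF abs]] LIMSEQ_unique unfolding P_def by metis
qed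

section \<open>The theta series\<close>

definition tri :: "int \<Rightarrow> int" where
  "tri a = a * (a - 1) div 2"

lemma two_mult_tri: "2 * tri a = a * (a - 1)"
proof -
  have "even (a * (a - 1))" by simp
  then show ?thesis unfolding tri_def by simp
qed

lemma tri_plus_1: "tri (a + 1) = tri a + a"
  using two_mult_tri[of a] two_mult_tri[of "a + 1"] by (simp add: algebra_simps)

lemma tri_minus_1: "tri (a - 1) = tri a - a + 1"
  using two_mult_tri[of a] two_mult_tri[of "a - 1"] by (simp add: algebra_simps)

lemma tri_nonneg: "tri a \<ge> 0"
proof -
  have "a * (a - 1) \<ge> 0"
    by (cases "a \<ge> 1") (auto intro: mult_nonneg_nonneg mult_nonpos_nonpos)
  then show ?thesis using two_mult_tri[of a] by simp
qed

lemma abs_le_if_tri_le: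
  assumes "tri a \<le> n"
  shows "\<bar>a\<bar> \<le> \<bar>n\<bar> + 1"
proof (rule ccontr)
  assume "\<not> \<bar>a\<bar> \<le> \<bar>n\<bar> + 1"
  then have a: "\<bar>a\<bar> \<ge> \<bar>n\<bar> + 2" by simp
  have "a * (a - 1) \<ge> \<bar>a\<bar> * (\<bar>a\<bar> - 1)"
    by (cases "a \<ge> 0") (auto simp: algebra_simps)
  moreover have "\<bar>a\<bar> * (\<bar>a\<bar> - 1) \<ge> 2 * (\<bar>a\<bar> - 1)"
    by (rule mult_right_mono) (use a in auto)
  ultimately have "tri a \<ge> \<bar>a\<bar> - 1"
    using two_mult_tri[of a] by simp
  then show False using assms a by simp
qed

lemma summable_if_ratio_tendsto_0:
  fixes F c :: "nat \<Rightarrow> real"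
  assumes "\<And>n. F (Suc n) = F n * c n" "\<And>n. F n \<ge> 0" "c \<longlonglongrightarrow> 0"
  shows "summable F"
proof -
  have "eventually (\<lambda>n. c n < 1/2) sequentially"
    using assms(3) by (rule order_tendstoD) simp
  then obtain N where N: "\<And>n. n \<ge> N \<Longrightarrow> c n < 1/2"
    by (auto simp: eventually_sequentially)
  show ?thesis
  proof (rule summable_ratio_test[of "1/2" N])
    fix n
    assume "n \<ge> N"
    then have "F n * c n \<le> F n * (1/2)"
      using N[of n] assms(2)[of n] by (intro mult_left_mono) auto
    then show "norm (F (Suc n)) \<le> 1/2 * norm (F n)"
      using assms(1)[of n] assms(2)[of "Suc n"] by simp
  qed simp
qed

lemma nonneg_summable_on_int:
  fixes V :: "int \<Rightarrow> real"
  assumes "\<And>a. V a \<ge> 0" "summable (\<lambda>n. V (int n))" "summable (\<lambda>n. V (- int n - 1))"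
  shows "V summable_on UNIV"
proof -
  have "V summable_on range f" if "inj f" "summable (\<lambda>n. V (f n))" for f :: "nat \<Rightarrow> int"
  proof -
    have "(V \<circ> f) summable_on UNIV"
      using that assms(1) by (subst summable_on_UNIV_nonneg_real_iff) (auto simp: o_def)
    then show ?thesis
      using that(1) by (subst summable_on_reindex) (auto intro: inj_on_subset)
  qed
  moreover have "inj (\<lambda>n. - int n - 1)" "inj int"
    by (auto simp: inj_def)
  moreover have "range int \<union> range (\<lambda>n. - int n - 1) = UNIV"
  proof -
    have "x \<in> range int \<union> range (\<lambda>n. - int n - 1)" for x :: int
      by (cases "x \<ge> 0") (auto simp: image_iff intro: exI[of _ "nat x"] exI[of _ "nat (- x - 1)"])
    then show ?thesis by blast
  qed
  ultimately show ?thesis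
    using summable_on_union assms(2,3) by metis
qed

lemma theta_series_abs_summable:
  fixes q \<zeta> :: complex
  assumes "norm q < 1" "q \<noteq> 0" "\<zeta> \<noteq> 0"
  shows "(\<lambda>a. norm ((-1) powi a * q powi tri a * \<zeta> powi a)) summable_on UNIV"
proof -
  define \<rho> \<sigma> where "\<rho> = norm q" and "\<sigma> = norm \<zeta>"
  have \<rho>: "0 < \<rho>" "\<rho> < 1" and \<sigma>: "0 < \<sigma>"
    using assms by (auto simp: \<rho>_def \<sigma>_def)
  define V where "V = (\<lambda>a. \<rho> powi tri a * \<sigma> powi a)"
  have V_nonneg: "V a \<ge> 0" for a
    using \<rho> \<sigma> by (simp add: V_def)
  have "(\<lambda>n. \<rho> ^ n) \<longlonglongrightarrow> 0"
    using \<rho> by (intro LIMSEQ_power_zero) simp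
  then have ratio: "(\<lambda>n. \<rho> ^ n * c) \<longlonglongrightarrow> 0" for c
    by (rule tendsto_mult_left_zero)
  \<comment> \<open>Going one step outwards multiplies the term by \<open>\<rho>\<^sup>n \<sigma>\<close>, resp. \<open>\<rho>\<^sup>n \<rho>\<^sup>2 / \<sigma>\<close>.\<close>
  have "summable (\<lambda>n. V (int n))"
  proof (rule summable_if_ratio_tendsto_0[OF _ V_nonneg ratio])
    show "V (int (Suc n)) = V (int n) * (\<rho> ^ n * \<sigma>)" for n
      using \<rho> \<sigma> by (simp add: V_def add.commute[of 1] tri_plus_1 power_int_add mult_ac)
  qed
  moreover have "summable (\<lambda>n. V (- int n - 1))"
  proof (rule summable_if_ratio_tendsto_0[OF _ V_nonneg ratio])
    show "V (- int (Suc n) - 1) = V (- int n - 1) * (\<rho> ^ n * (\<rho> ^ 2 / \<sigma>))" for n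
    proof -
      have step: "- int (Suc n) - 1 = (- int n - 1) - 1" by simp
      have "V (- int (Suc n) - 1) = \<rho> powi (tri (- int n - 1) + (int n + 2)) * \<sigma> powi ((- int n - 1) + (- 1))"
        unfolding step V_def tri_minus_1 by (simp add: algebra_simps)
      also have "\<dots> = V (- int n - 1) * (\<rho> ^ n * (\<rho> ^ 2 / \<sigma>))"
      proof -
        have "\<rho> powi (tri (- int n - 1) + (int n + 2)) = \<rho> powi tri (- int n - 1) * (\<rho> ^ n * \<rho> ^ 2)"
          using power_int_add[of \<rho> "tri (- int n - 1)" "int n + 2"] power_int_add[of \<rho> "int n" 2] \<rho> by simp
        moreover have "\<sigma> powi ((- int n - 1) + (- 1)) = \<sigma> powi (- int n - 1) / \<sigma>"
          using power_int_add[of \<sigma> "- int n - 1" "- 1"] \<sigma> by (simp add: divide_inverse)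
        ultimately show ?thesis
          by (simp add: V_def field_simps)
      qed
      finally show ?thesis .
    qed
  qed
  ultimately have "V summable_on UNIV"
    by (rule nonneg_summable_on_int[OF V_nonneg])
  then show ?thesis
    by (simp add: V_def \<rho>_def \<sigma>_def norm_mult norm_power_int)
qed

lemma theta1_term_eq:
  "(-1) powi a * exp (2 * pi * \<i> * (\<tau> * (of_int a - 1/2)^2 / 2 + z * (of_int a - 1/2)))
   = exp (2 * pi * \<i> * (\<tau> / 8 - z / 2)) *
     ((-1) powi a * exp (2 * pi * \<i> * \<tau>) powi tri a * exp (2 * pi * \<i> * z) powi a)"
proof -
  have tri_eq: "(of_int (tri a) :: complex) = of_int a * (of_int a - 1) / 2"
    using arg_cong[OF two_mult_tri[of a], of "of_int :: int \<Rightarrow> complex"] by (simp add: eq_divide_eq mult.commute)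
  have "2 * pi * \<i> * (\<tau> * (of_int a - 1/2)^2 / 2 + z * (of_int a - 1/2)) =
     2 * pi * \<i> * (\<tau> / 8 - z / 2) + (of_int (tri a) * (2 * pi * \<i> * \<tau>) + of_int a * (2 * pi * \<i> * z))"
    unfolding tri_eq by (simp add: field_simps power2_eq_square)
  then show ?thesis
    by (simp add: exp_power_int exp_add mult_ac)
qed

lemma theta1_eq_theta_series:
  "theta1 \<tau> z = exp (2 * pi * \<i> * (\<tau> / 8 - z / 2)) *
     (\<Sum>\<^sub>\<infinity>a. (-1) powi a * exp (2 * pi * \<i> * \<tau>) powi tri a * exp (2 * pi * \<i> * z) powi a)"
  unfolding theta1_def theta1_term_eq by (rule infsum_cmult_right')

section \<open>Expansion of \<open>\<phi>\<^sub>-\<^sub>2\<^sub>,\<^sub>1\<close>\<close>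

lemma has_sum_product:
  fixes f :: "'a \<Rightarrow> complex" and g :: "'b \<Rightarrow> complex"
  assumes "(\<lambda>x. norm (f x)) summable_on A" "(f has_sum a) A"
    and "(\<lambda>y. norm (g y)) summable_on B" "(g has_sum b) B"
  shows "((\<lambda>(x, y). f x * g y) has_sum (a * b)) (A \<times> B)"
    and "(\<lambda>p. norm ((\<lambda>(x, y). f x * g y) p)) summable_on (A \<times> B)"
proof -
  have "(\<lambda>x. norm (f x) * (\<Sum>\<^sub>\<infinity>y\<in>B. norm (g y))) summable_on A"
    using assms(1) by (rule summable_on_cmult_left)
  moreover have "(\<Sum>\<^sub>\<infinity>y\<in>B. norm (g y)) \<ge> 0"
    by (rule infsum_nonneg) simp
  ultimately show abs: "(\<lambda>p. norm ((\<lambda>(x, y). f x * g y) p)) summable_on (A \<times> B)"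
    using assms(3) Infinite_Sum.abs_summable_on_Sigma_iff[where f = "\<lambda>(x, y). f x * g y" and A = A and B = "\<lambda>_. B"]
    by (auto simp: norm_mult infsum_cmult_right' abs_mult intro: summable_on_cmult_right)
  show "((\<lambda>(x, y). f x * g y) has_sum (a * b)) (A \<times> B)"
  proof (rule has_sum_SigmaI)
    show "((\<lambda>y. case (x, y) of (x, y) \<Rightarrow> f x * g y) has_sum f x * b) B" for x
      using has_sum_cmult_right[OF assms(4), of "f x"] by simp
    show "((\<lambda>x. f x * b) has_sum a * b) A"
      by (rule has_sum_cmult_left[OF assms(2)])
    show "(\<lambda>(x, y). f x * g y) summable_on Sigma A (\<lambda>_. B)"
      using abs by (simp add: abs_summable_summable)
  qed
qed

lemma has_sum_finite_fibres:
  fixes g :: "'a \<Rightarrow> 'c::{comm_monoid_add, uniform_space, uniform_topological_group_add}"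
  assumes "(g has_sum s) UNIV" "\<And>y. finite (h -` {y})"
  shows "((\<lambda>y. \<Sum>x\<in>h -` {y}. g x) has_sum s) UNIV"
proof (rule has_sum_Sigma')
  have "(g has_sum s) UNIV = ((\<lambda>p. g (snd p)) has_sum s) (Sigma UNIV (\<lambda>y. h -` {y}))"
    by (rule has_sum_reindex_bij_witness[where i = snd and j = "\<lambda>x. (h x, x)"]) auto
  with assms(1) show "((\<lambda>p. g (snd p)) has_sum s) (Sigma UNIV (\<lambda>y. h -` {y}))"
    by simp
  show "((\<lambda>x. g (snd (y, x))) has_sum (\<Sum>x\<in>h -` {y}. g x)) (h -` {y})" for y
    using assms(2) by (simp add: has_sum_finiteI)
qed

lemma phi_m2_1_eq_product:
  fixes \<tau> z :: complex
  defines "q \<equiv> exp (2 * pi * \<i> * \<tau>)" and "\<zeta> \<equiv> exp (2 * pi * \<i> * z)"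
  assumes q: "norm q < 1"
  shows "phi_m2_1 \<tau> z = (\<Sum>\<^sub>\<infinity>a. (-1) powi a * q powi tri a * \<zeta> powi a) ^ 2
    * inverse ((\<Prod>n. 1 - q ^ Suc n) ^ 6) * \<zeta> powi (- 1)"
proof -
  define S where "S = (\<Sum>\<^sub>\<infinity>a. (-1) powi a * q powi tri a * \<zeta> powi a)"
  define P where "P = (\<Prod>n. 1 - q ^ Suc n)"
  define K where "K = exp (2 * pi * \<i> * (\<tau> / 8 - z / 2))"
  define E where "E = exp (2 * pi * \<i> * \<tau> / 24)"
  have P: "P \<noteq> 0"
    unfolding P_def by (rule prodinf_nonzero[OF convergent_prod_one_minus_power[OF q] one_minus_power_neq_0[OF q]])
  have E: "E \<noteq> 0"
    by (simp add: E_def)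
  \<comment> \<open>The fractional powers \<open>q\<^sup>1\<^sup>/\<^sup>8 \<zeta>\<^sup>-\<^sup>1\<^sup>/\<^sup>2\<close> of \<open>\<theta>\<^sub>1\<close> and \<open>q\<^sup>1\<^sup>/\<^sup>2\<^sup>4\<close> of \<open>\<eta>\<close> cancel up to \<open>\<zeta>\<^sup>-\<^sup>1\<close>.\<close>
  have K: "K ^ 2 = E ^ 6 * \<zeta> powi (- 1)"
  proof -
    have "K ^ 2 = exp (of_nat 2 * (2 * pi * \<i> * (\<tau> / 8 - z / 2)))"
      unfolding K_def by (rule exp_of_nat_mult [symmetric])
    also have "of_nat 2 * (2 * pi * \<i> * (\<tau> / 8 - z / 2)) = of_nat 6 * (2 * pi * \<i> * \<tau> / 24) + - (2 * pi * \<i> * z)"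
      by (simp add: field_simps)
    finally show ?thesis
      unfolding exp_add exp_of_nat_mult exp_minus E_def \<zeta>_def by (simp add: power_int_minus)
  qed
  have "theta1 \<tau> z = K * S" "dedekind_eta \<tau> = E * P"
    by (simp_all add: theta1_eq_theta_series dedekind_eta_def K_def S_def E_def P_def q_def \<zeta>_def)
  then have "phi_m2_1 \<tau> z = K ^ 2 * S ^ 2 / (E ^ 6 * P ^ 6)"
    by (simp add: phi_m2_1_def power_mult_distrib)
  also have "\<dots> = S ^ 2 * inverse (P ^ 6) * \<zeta> powi (- 1)"
    unfolding K using E P by (simp add: field_simps)
  finally show ?thesis
    by (simp only: S_def P_def)
qed

definition term_exponents :: "(int \<times> int) \<times> nat \<Rightarrow> int \<times> int" where
  "term_exponents = (\<lambda>((a, b), k). (tri a + tri b + int k, a + b - 1))"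

definition phi_count :: "int \<Rightarrow> int \<Rightarrow> nat" where
  "phi_count n r = (\<Sum>x\<in>term_exponents -` {(n, r)}. inv_eta6_coeff (snd x))"

lemma finite_term_exponents_fibre: "finite (term_exponents -` {y})"
proof -
  obtain n r where y: "y = (n, r)"
    by fastforce
  define N where "N = \<bar>n\<bar> + 1"
  have "term_exponents -` {(n, r)} \<subseteq> ({- N..N} \<times> {- N..N}) \<times> {..nat n}"
  proof
    fix x
    assume "x \<in> term_exponents -` {(n, r)}"
    then obtain a b k where x: "x = ((a, b), k)" and "tri a + tri b + int k = n"
      by (auto simp: term_exponents_def split: prod.splits)
    then have "tri a \<le> n" "tri b \<le> n" "int k \<le> n"
      using tri_nonneg[of a] tri_nonneg[of b] by auto
    then show "x \<in> ({- N..N} \<times> {- N..N}) \<times> {..nat n}"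
      using abs_le_if_tri_le[of a n] abs_le_if_tri_le[of b n] x by (auto simp: N_def)
  qed
  then show ?thesis
    unfolding y by (rule finite_subset) simp
qed

lemma term_exponents_fibre_nonempty:
  assumes "4 * n - r ^ 2 \<ge> -1"
  shows "term_exponents -` {(n, r)} \<noteq> {}"
proof -
  \<comment> \<open>Take \<open>a, b\<close> as equal as possible: then \<open>tri a + tri b = \<lfloor>r\<^sup>2 / 4\<rfloor> \<le> n\<close>.\<close>
  obtain a b where ab: "a + b - 1 = r" and tri_le: "tri a + tri b \<le> n"
  proof (cases "even r")
    case True
    then obtain m where r: "r = 2 * m" by (auto elim: evenE)
    have "tri (m + 1) + tri m = m * m"
      using tri_plus_1[of m] two_mult_tri[of m] by (simp add: algebra_simps)
    moreover have "m * m \<le> n"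
      using assms by (simp add: r power2_eq_square algebra_simps)
    ultimately show ?thesis
      using that[of "m + 1" m] r by simp
  next
    case False
    then obtain m where r: "r = 2 * m - 1"
      by (metis add_diff_cancel_right' evenE odd_add odd_one)
    have "tri m + tri m = m * (m - 1)"
      using two_mult_tri[of m] by simp
    moreover have "m * (m - 1) \<le> n"
      using assms by (simp add: r power2_eq_square algebra_simps)
    ultimately show ?thesis
      using that[of m m] r by simp
  qed
  then have "term_exponents ((a, b), nat (n - tri a - tri b)) = (n, r)"
    by (simp add: term_exponents_def)
  then show ?thesis
    by blast
qed

lemma phi_count_pos:
  assumes "4 * n - r ^ 2 \<ge> -1"
  shows "phi_count n r > 0"
proof -
  obtain x where x: "x \<in> term_exponents -` {(n, r)}"
    using term_exponents_fibre_nonempty[OF assms] by blast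
  have "inv_eta6_coeff (snd x) \<le> phi_count n r"
    unfolding phi_count_def by (rule member_le_sum) (use x finite_term_exponents_fibre in auto)
  with inv_eta6_coeff_pos[of "snd x"] show ?thesis
    by simp
qed

lemma phi_m2_1_has_sum_terms:
  fixes \<tau> z :: complex
  defines "q \<equiv> exp (2 * pi * \<i> * \<tau>)" and "\<zeta> \<equiv> exp (2 * pi * \<i> * z)"
  assumes "Im \<tau> > 0"
  shows "((\<lambda>x. (-1) powi (snd (term_exponents x) + 1) * of_nat (inv_eta6_coeff (snd x))
      * q powi fst (term_exponents x) * \<zeta> powi snd (term_exponents x)) has_sum phi_m2_1 \<tau> z) UNIV"
proof -
  have q: "norm q < 1"
    using assms by (simp add: q_def norm_exp_eq_Re)
  have "q \<noteq> 0" "\<zeta> \<noteq> 0"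
    by (simp_all add: q_def \<zeta>_def)
  define v where "v = (\<lambda>a. (-1) powi a * q powi tri a * \<zeta> powi a)"
  define p where "p = (\<lambda>k. of_nat (inv_eta6_coeff k) * q ^ k)"
  define P where "P = (\<Prod>n. 1 - q ^ Suc n)"
  have v_abs: "(\<lambda>a. norm (v a)) summable_on UNIV"
    unfolding v_def using q \<open>q \<noteq> 0\<close> \<open>\<zeta> \<noteq> 0\<close> by (rule theta_series_abs_summable)
  then have v: "(v has_sum (\<Sum>\<^sub>\<infinity>a. v a)) UNIV"
    by (simp add: abs_summable_summable)
  have "summable (\<lambda>k. norm (p k))"
    using summable_inv_eta6_series[of "norm q"] q by (simp add: p_def norm_mult norm_power)
  then have p_abs: "(\<lambda>k. norm (p k)) summable_on UNIV" and p: "(p has_sum inverse (P ^ 6)) UNIV"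
    using inv_eta6_series_sums[OF q]
    by (auto simp: summable_on_UNIV_nonneg_real_iff p_def P_def intro: norm_summable_imp_has_sum)
  have "((\<lambda>((a, b), k). v a * v b * p k) has_sum (\<Sum>\<^sub>\<infinity>a. v a) ^ 2 * inverse (P ^ 6)) UNIV"
    using has_sum_product[OF has_sum_product(2)[OF v_abs v v_abs v] has_sum_product(1)[OF v_abs v v_abs v] p_abs p]
    by (simp add: power2_eq_square case_prod_unfold)
  from has_sum_cmult_left[OF this, of "\<zeta> powi (- 1)"]
  have "((\<lambda>((a, b), k). v a * v b * p k * \<zeta> powi (- 1)) has_sum phi_m2_1 \<tau> z) UNIV"
    using phi_m2_1_eq_product[OF q[unfolded q_def]] by (simp add: case_prod_unfold q_def \<zeta>_def P_def v_def)
  moreover have "v a * v b * p k * \<zeta> powi (- 1) = (-1) powi (a + b - 1 + 1) * of_nat (inv_eta6_coeff k)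
      * q powi (tri a + tri b + int k) * \<zeta> powi (a + b - 1)" for a b k
    using \<open>q \<noteq> 0\<close> \<open>\<zeta> \<noteq> 0\<close> by (simp add: v_def p_def power_int_add power_int_diff field_simps)
  ultimately show ?thesis
    by (simp add: term_exponents_def case_prod_unfold)
qed

lemma phi_m2_1_expansion:
  fixes \<tau> z :: complex
  assumes "Im \<tau> > 0"
  shows "((\<lambda>(n, r). (-1) powi (r + 1) * of_nat (phi_count n r)
      * exp (2 * pi * \<i> * \<tau>) powi n * exp (2 * pi * \<i> * z) powi r) has_sum phi_m2_1 \<tau> z) UNIV"
proof -
  define t where "t = (\<lambda>x. (-1) powi (snd (term_exponents x) + 1) * of_nat (inv_eta6_coeff (snd x))
      * exp (2 * pi * \<i> * \<tau>) powi fst (term_exponents x) * exp (2 * pi * \<i> * z) powi snd (term_exponents x))"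
  have fibre_sum: "(\<Sum>x\<in>term_exponents -` {y}. t x) = (\<lambda>(n, r). (-1) powi (r + 1) * of_nat (phi_count n r)
      * exp (2 * pi * \<i> * \<tau>) powi n * exp (2 * pi * \<i> * z) powi r) y" for y
  proof -
    obtain n r where y: "y = (n, r)"
      by fastforce
    have "(\<Sum>x\<in>term_exponents -` {(n, r)}. t x) = (\<Sum>x\<in>term_exponents -` {(n, r)}. (-1) powi (r + 1)
        * of_nat (inv_eta6_coeff (snd x)) * exp (2 * pi * \<i> * \<tau>) powi n * exp (2 * pi * \<i> * z) powi r)"
      by (rule sum.cong) (auto simp: t_def)
    then show ?thesis
      by (simp add: y phi_count_def sum_distrib_left sum_distrib_right)
  qed
  show ?thesis
    using has_sum_finite_fibres[OF phi_m2_1_has_sum_terms[of \<tau> z, OF assms, folded t_def] finite_term_exponents_fibre]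
    by (simp only: fibre_sum)
qed

lemma phi_m2_1_coeff_eq: "phi_m2_1_coeff = (\<lambda>n r. (-1) powi (r + 1) * of_nat (phi_count n r))"
  unfolding phi_m2_1_coeff_def
proof (rule the_equality)
  fix c
  assume "\<forall>\<tau> z. Im \<tau> > 0 \<longrightarrow> ((\<lambda>(n, r). c n r * exp (2 * pi * \<i> * \<tau>) powi n
    * exp (2 * pi * \<i> * z) powi r) has_sum phi_m2_1 \<tau> z) UNIV"
  then show "c = (\<lambda>n r. (-1) powi (r + 1) * of_nat (phi_count n r))"
    using phi_m2_1_expansion by (intro double_fourier_coeffs_unique[where P = phi_m2_1]) auto
qed (use phi_m2_1_expansion in auto)

theorem mainTheorem1:
  fixes \<Delta> n r :: int
  assumes "\<Delta> \<ge> -1"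
    and "\<Delta> mod 4 = 0 \<or> \<Delta> mod 4 = 3"
    and "4 * n - r ^ 2 = \<Delta>"
  shows "(-1) powi (\<Delta> + 1) * phi_m2_1_coeff n r \<in> \<real> \<and>
         Re ((-1) powi (\<Delta> + 1) * phi_m2_1_coeff n r) > 0"
proof -
  have "\<Delta> - r = 4 * n - r * (r + 1)"
    using assms(3) by (simp add: power2_eq_square algebra_simps)
  then have "even (\<Delta> - r)"
    by simp
  then have "even (\<Delta> + 1) \<longleftrightarrow> even (r + 1)"
    by presburger
  then have "(-1) powi (\<Delta> + 1) * phi_m2_1_coeff n r = of_nat (phi_count n r)"
    by (simp add: phi_m2_1_coeff_eq power_int_minus_left)
  moreover have "phi_count n r > 0"
    using assms(1,3) by (intro phi_count_pos) simp
  ultimately show ?thesis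
    by simp
qed

end
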